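(* Let $(n,t)\in\{(9,11),(10,13),(11,16)\}$. Then every $n$-vertex graph containing at least $t$ triangles contains a copy of $\widehat P_4$ as a (not necessarily induced) subgraph. Equivalently, $\mathrm{ex}(9,K_3,\widehat P_4)\le 10$, $\mathrm{ex}(10,K_3,\widehat P_4)\le 12$ and $\mathrm{ex}(11,K_3,\widehat P_4)\le 15$.
   Context: All graphs are finite and simple. $P_4$ denotes the path on $4$ vertices. For a graph $G$, its suspension $\widehat G$ is the graph obtained from $G$ by adding one new vertex and joining it to every vertex of $G$. $\mathrm{ex}(n,K_3,H)$ denotes the maximum number of triangles in an $n$-vertex graph containing no subgraph isomorphic to $H$. *)

theory Defs
  imports Main
begin

definition simple_graph :: "'a set \<Rightarrow> 'a set set \<Rightarrow> bool" where
  "simple_graph V E \<longleftrightarrow> finite V \<and> (\<forall>e\<in>E. e \<subseteq> V \<and> card e = 2)"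

definition triangles :: "'a set \<Rightarrow> 'a set set \<Rightarrow> 'a set set" where
  "triangles V E = {T. T \<subseteq> V \<and> card T = 3 \<and> (\<forall>x\<in>T. \<forall>y\<in>T. x \<noteq> y \<longrightarrow> {x, y} \<in> E)}"

text \<open>The suspension of P4 (a "gem"): vertices 0 (apex), 1,2,3,4 (path 1-2-3-4).\<close>
definition susp_P4_edges :: "nat set set" where
  "susp_P4_edges = {{0,1},{0,2},{0,3},{0,4},{1,2},{2,3},{3,4}}"

definition contains_subgraph :: "'b set \<Rightarrow> 'b set set \<Rightarrow> 'a set \<Rightarrow> 'a set set \<Rightarrow> bool" where
  "contains_subgraph VH EH V E \<longleftrightarrow>
     (\<exists>f. inj_on f VH \<and> f ` VH \<subseteq> V \<and> (\<forall>e\<in>EH. f ` e \<in> E))"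

end

theory Submission
  imports Defs
begin

text \<open>An edge is light if it lies in exactly one triangle. In a gem-free graph a triangle with a
  light edge has a second light edge, and a triangle without light edges lies in a \<open>K\<^sub>4\<close>. So,
  with \<open>k\<close> the number of \<open>K\<^sub>4\<close>'s and \<open>t\<^sub>L\<close> the number of triangles having a light edge, there
  are at most \<open>4k + t\<^sub>L\<close> triangles, and \<open>2 t\<^sub>L\<close> is at most the number of light edges minus the
  number of triangles formed by light edges. Mantel's bound in the form
  \<open>4 |F| \<le> |W|\<^sup>2 + 4 #triangles\<close>, applied to the light edges away from the \<open>K\<^sub>4\<close>'s, then bounds
  \<open>t\<^sub>L\<close>. Distinct \<open>K\<^sub>4\<close>'s share at most one vertex and no outside vertex has two neighbours in a
  \<open>K\<^sub>4\<close>; on at most 11 vertices this leaves few configurations of \<open>K\<^sub>4\<close>'s, and each of them gives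
  \<open>8 #triangles \<le> n\<^sup>2\<close>, which is less than \<open>8t\<close>.\<close>

section \<open>A Mantel-type bound\<close>

lemma card_edges_containing:
  assumes "simple_graph W F" "x \<in> W"
  shows "card {e \<in> F. x \<in> e} = card {z \<in> W. {x, z} \<in> F}"
proof -
  have F: "e \<subseteq> W \<and> card e = 2" if "e \<in> F" for e
    using assms(1) that by (simp add: simple_graph_def)
  have "{e \<in> F. x \<in> e} = (\<lambda>z. {x, z}) ` {z \<in> W. {x, z} \<in> F}"
  proof (intro equalityI subsetI)
    fix e assume e: "e \<in> {e \<in> F. x \<in> e}"
    then have "card e = 2" "x \<in> e" using F by auto
    then obtain z where "e = {x, z}" by (metis card_2_iff insert_commute insertE singletonD)
    then show "e \<in> (\<lambda>z. {x, z}) ` {z \<in> W. {x, z} \<in> F}" using e F by auto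
  qed auto
  moreover have "inj_on (\<lambda>z. {x, z}) {z \<in> W. {x, z} \<in> F}"
  proof (rule inj_onI)
    fix z1 z2 assume "z1 \<in> {z \<in> W. {x, z} \<in> F}" "z2 \<in> {z \<in> W. {x, z} \<in> F}" "{x, z1} = {x, z2}"
    moreover from this have "z1 \<noteq> x" "z2 \<noteq> x" using F by fastforce+
    ultimately show "z1 = z2" by (metis doubleton_eq_iff)
  qed
  ultimately show ?thesis by (simp add: card_image)
qed

lemma finite_triangles: "finite V \<Longrightarrow> finite (triangles V E)"
  by (rule finite_subset[of _ "Pow V"]) (auto simp: triangles_def)

lemma triangles_mono: "V' \<subseteq> V \<Longrightarrow> E' \<subseteq> E \<Longrightarrow> triangles V' E' \<subseteq> triangles V E"
  unfolding triangles_def by blast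

lemma card_edges_meeting_edge:
  assumes "simple_graph W F" "{x, y} \<in> F" "x \<noteq> y"
  shows "card {e \<in> F. x \<in> e \<or> y \<in> e} + 1 \<le> card W + card {z \<in> W. {x, z} \<in> F \<and> {y, z} \<in> F}"
proof -
  define P where "P = {e \<in> F. x \<in> e}"
  define Q where "Q = {e \<in> F. y \<in> e}"
  define Nx where "Nx = {z \<in> W. {x, z} \<in> F}"
  define Ny where "Ny = {z \<in> W. {y, z} \<in> F}"
  have finW: "finite W" and F: "\<And>e. e \<in> F \<Longrightarrow> e \<subseteq> W \<and> card e = 2"
    using assms(1) by (auto simp: simple_graph_def)
  have "finite F" by (rule finite_subset[of _ "Pow W"]) (use F finW in auto)
  then have finPQ: "finite P" "finite Q" by (simp_all add: P_def Q_def)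
  have "{x, y} \<in> P \<inter> Q" using assms(2) by (simp add: P_def Q_def)
  then have "1 \<le> card (P \<inter> Q)"
    using finPQ by (metis One_nat_def Suc_leI card_gt_0_iff empty_iff finite_Int)
  then have "card (P \<union> Q) + 1 \<le> card P + card Q" using card_Un_Int[OF finPQ] by linarith
  also have "card P + card Q = card Nx + card Ny"
    unfolding P_def Q_def Nx_def Ny_def
    using card_edges_containing[OF assms(1)] F[OF assms(2)] by simp
  also have "\<dots> = card (Nx \<union> Ny) + card (Nx \<inter> Ny)"
    using finW by (intro card_Un_Int) (simp_all add: Nx_def Ny_def)
  also have "card (Nx \<union> Ny) \<le> card W" using finW by (intro card_mono) (auto simp: Nx_def Ny_def)
  finally have "card (P \<union> Q) + 1 \<le> card W + card (Nx \<inter> Ny)" by simp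
  moreover have "P \<union> Q = {e \<in> F. x \<in> e \<or> y \<in> e}" by (auto simp: P_def Q_def)
  moreover have "Nx \<inter> Ny = {z \<in> W. {x, z} \<in> F \<and> {y, z} \<in> F}" by (auto simp: Nx_def Ny_def)
  ultimately show ?thesis by simp
qed

lemma card_triangles_remove_edge_ends:
  assumes "simple_graph W F" "{x, y} \<in> F" "x \<noteq> y"
  defines "W' \<equiv> W - {x, y}"
  shows "card (triangles W' {e \<in> F. e \<subseteq> W'}) + card {z \<in> W. {x, z} \<in> F \<and> {y, z} \<in> F}
    \<le> card (triangles W F)"
proof -
  define C where "C = {z \<in> W. {x, z} \<in> F \<and> {y, z} \<in> F}"
  have finW: "finite W" and F: "\<And>e. e \<in> F \<Longrightarrow> e \<subseteq> W \<and> card e = 2"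
    using assms(1) by (auto simp: simple_graph_def)
  have C: "z \<in> W" "z \<noteq> x" "z \<noteq> y" if "z \<in> C" for z
    using that F by (fastforce simp: C_def)+
  have on_xy: "(\<lambda>z. {x, y, z}) ` C \<subseteq> triangles W F"
  proof
    fix \<tau> assume "\<tau> \<in> (\<lambda>z. {x, y, z}) ` C"
    then obtain z where z: "z \<in> C" "\<tau> = {x, y, z}" by blast
    have "card {x, y, z} = 3" using C[OF z(1)] assms(3) by auto
    then show "\<tau> \<in> triangles W F"
      using z F[OF assms(2)] assms(2) by (auto simp: triangles_def C_def insert_commute)
  qed
  have inj: "inj_on (\<lambda>z. {x, y, z}) C"
    by (rule inj_onI) (use C in \<open>auto simp: insert_eq_iff\<close>)
  have "triangles W' {e \<in> F. e \<subseteq> W'} \<subseteq> triangles W F"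
    by (rule triangles_mono) (auto simp: W'_def)
  moreover have "triangles W' {e \<in> F. e \<subseteq> W'} \<inter> (\<lambda>z. {x, y, z}) ` C = {}"
    by (auto simp: triangles_def W'_def)
  moreover have "finite (triangles W F)" using finW by (rule finite_triangles)
  ultimately have "card (triangles W' {e \<in> F. e \<subseteq> W'}) + card ((\<lambda>z. {x, y, z}) ` C)
      = card (triangles W' {e \<in> F. e \<subseteq> W'} \<union> (\<lambda>z. {x, y, z}) ` C)"
    using on_xy by (intro card_Un_disjoint[symmetric]) (auto intro: finite_subset)
  also have "\<dots> \<le> card (triangles W F)"
    using on_xy \<open>triangles W' _ \<subseteq> _\<close> \<open>finite (triangles W F)\<close> by (intro card_mono) auto
  finally have "card (triangles W' {e \<in> F. e \<subseteq> W'}) + card ((\<lambda>z. {x, y, z}) ` C)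
      \<le> card (triangles W F)" .
  then show ?thesis using card_image[OF inj] by (simp add: C_def)
qed

text \<open>Deleting the ends of an edge \<open>xy\<close> loses at most
  \<open>|W| - 1 + c\<close> edges, where \<open>c\<close> counts the common neighbours of \<open>x\<close> and \<open>y\<close>, and at least \<open>c\<close>
  triangles.\<close>
lemma mantel_with_triangles:
  assumes "simple_graph W F"
  shows "4 * card F \<le> card W ^ 2 + 4 * card (triangles W F)"
  using assms
proof (induction "card W" arbitrary: W F rule: less_induct)
  case less
  have finW: "finite W" and F: "\<And>e. e \<in> F \<Longrightarrow> e \<subseteq> W \<and> card e = 2"
    using less.prems by (auto simp: simple_graph_def)
  show ?case
  proof (cases "F = {}")
    case False
    then obtain x y where xy: "{x, y} \<in> F" "x \<noteq> y"
      using F by (metis card_2_iff ex_in_conv)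
    define W' where "W' = W - {x, y}"
    define F' where "F' = {e \<in> F. e \<subseteq> W'}"
    have "card {x, y} \<le> card W" using F[OF xy(1)] finW by (intro card_mono) auto
    then have cardW: "card W = card W' + 2"
      using F[OF xy(1)] xy(2) finW by (simp add: W'_def card_Diff_subset)
    have "4 * card F' \<le> card W' ^ 2 + 4 * card (triangles W' F')"
      using F finW cardW by (intro less.hyps) (auto simp: simple_graph_def W'_def F'_def)
    moreover have "card F = card F' + card {e \<in> F. x \<in> e \<or> y \<in> e}"
    proof -
      have "finite F" by (rule finite_subset[of _ "Pow W"]) (use F finW in auto)
      have "F = F' \<union> {e \<in> F. x \<in> e \<or> y \<in> e}" using F by (auto simp: F'_def W'_def)
      also have "card \<dots> = card F' + card {e \<in> F. x \<in> e \<or> y \<in> e}"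
        using \<open>finite F\<close> by (intro card_Un_disjoint) (auto simp: F'_def W'_def)
      finally show ?thesis .
    qed
    moreover note card_edges_meeting_edge[OF less.prems xy]
      card_triangles_remove_edge_ends[OF less.prems xy]
    moreover have "card W' ^ 2 + 4 * card W = card W ^ 2 + 4"
      using cardW by (simp add: power2_eq_square algebra_simps)
    ultimately show ?thesis unfolding F'_def W'_def by linarith
  qed simp
qed

section \<open>Gem-free graphs\<close>

locale gem_free =
  fixes V :: "'a set" and E :: "'a set set"
  assumes graph: "simple_graph V E"
    and no_gem_subgraph: "\<not> contains_subgraph {0..4::nat} susp_P4_edges V E"
begin

definition adj :: "'a \<Rightarrow> 'a \<Rightarrow> bool" where
  "adj x y \<longleftrightarrow> {x, y} \<in> E"

abbreviation Tri :: "'a set set" where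
  "Tri \<equiv> triangles V E"

lemma finite_V: "finite V"
  using graph by (simp add: simple_graph_def)

lemma edgeD: "e \<in> E \<Longrightarrow> e \<subseteq> V \<and> card e = 2"
  using graph by (simp add: simple_graph_def)

lemma finite_E: "finite E"
  by (rule finite_subset[of _ "Pow V"]) (use edgeD finite_V in auto)

lemma adj_sym: "adj x y \<longleftrightarrow> adj y x"
  by (simp add: adj_def insert_commute)

lemma adj_neq: "adj x y \<Longrightarrow> x \<noteq> y"
  using edgeD[of "{x, y}"] by (auto simp: adj_def)

lemma adj_in_V: "adj x y \<Longrightarrow> x \<in> V \<and> y \<in> V"
  using edgeD[of "{x, y}"] by (auto simp: adj_def)

lemma edgeE:
  assumes "e \<in> E"
  obtains x y where "e = {x, y}" "adj x y"
proof -
  obtain x y where "e = {x, y}" "x \<noteq> y" using edgeD[OF assms] by (meson card_2_iff)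
  then show thesis using that assms by (simp add: adj_def)
qed

lemma no_gem:
  assumes "adj v a" "adj v b" "adj v c" "adj v d" "adj a b" "adj b c" "adj c d"
    and "distinct [v, a, b, c, d]"
  shows False
proof -
  define f where "f i = (if i = 0 then v else if i = 1 then a else if i = 2 then b
    else if i = 3 then c else d)" for i :: nat
  have dom: "{0..4::nat} = {0, 1, 2, 3, 4}" by auto
  have "inj_on f {0..4}" using assms(8) unfolding dom f_def inj_on_def by auto
  moreover have "f ` {0..4} \<subseteq> V" using assms(1-4) adj_in_V unfolding dom f_def by auto
  moreover have "\<forall>e\<in>susp_P4_edges. f ` e \<in> E"
    using assms(1-7) unfolding susp_P4_edges_def f_def adj_def by (auto simp: insert_commute)
  ultimately show False
    using no_gem_subgraph unfolding contains_subgraph_def by blast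
qed

lemma triangle_iff: "\<tau> \<in> Tri \<longleftrightarrow> (\<exists>x y z. \<tau> = {x, y, z} \<and> adj x y \<and> adj y z \<and> adj x z)"
proof
  assume "\<tau> \<in> Tri"
  then have "card \<tau> = 3" and "\<forall>x\<in>\<tau>. \<forall>y\<in>\<tau>. x \<noteq> y \<longrightarrow> {x, y} \<in> E"
    by (auto simp: triangles_def)
  then show "\<exists>x y z. \<tau> = {x, y, z} \<and> adj x y \<and> adj y z \<and> adj x z"
    unfolding adj_def card_3_iff by blast
next
  assume "\<exists>x y z. \<tau> = {x, y, z} \<and> adj x y \<and> adj y z \<and> adj x z"
  then obtain x y z where "\<tau> = {x, y, z}" "adj x y" "adj y z" "adj x z" by blast
  moreover from this have "card \<tau> = 3" using adj_neq by auto
  ultimately show "\<tau> \<in> Tri"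
    using adj_in_V by (auto simp: triangles_def adj_def insert_commute)
qed

lemma triangleI: "adj x y \<Longrightarrow> adj y z \<Longrightarrow> adj x z \<Longrightarrow> {x, y, z} \<in> Tri"
  using triangle_iff by blast

lemma triangle_adj: "\<tau> \<in> Tri \<Longrightarrow> x \<in> \<tau> \<Longrightarrow> y \<in> \<tau> \<Longrightarrow> x \<noteq> y \<Longrightarrow> adj x y"
  by (auto simp: triangles_def adj_def)

lemma card_triangle: "\<tau> \<in> Tri \<Longrightarrow> card \<tau> = 3"
  by (auto simp: triangles_def)

lemma finite_triangle: "\<tau> \<in> Tri \<Longrightarrow> finite \<tau>"
  using card_triangle card.infinite by fastforce

lemma triangle_subset_V: "\<tau> \<in> Tri \<Longrightarrow> \<tau> \<subseteq> V"
  by (auto simp: triangles_def)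

lemma triangle_third_vertex:
  assumes "\<tau> \<in> Tri" "x \<in> \<tau>" "y \<in> \<tau>" "x \<noteq> y"
  obtains z where "\<tau> = {x, y, z}" "z \<noteq> x" "z \<noteq> y" "adj x z" "adj y z"
proof -
  have "card (\<tau> - {x, y}) = 1"
    using card_triangle[OF assms(1)] assms(2-4) by (simp add: card_Diff_subset)
  then obtain z where z: "\<tau> - {x, y} = {z}" by (auto simp: card_1_singleton_iff)
  then have "\<tau> = {x, y, z}" "z \<noteq> x" "z \<noteq> y" using assms(2,3) by auto
  then show thesis using that triangle_adj[OF assms(1)] by auto
qed

end

context gem_free
begin

definition light_edges :: "'a set set" where
  "light_edges = {e \<in> E. card {\<tau> \<in> Tri. e \<subseteq> \<tau>} = 1}"

definition light_triangles :: "'a set set" where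
  "light_triangles = {\<tau> \<in> Tri. \<exists>e \<in> light_edges. e \<subseteq> \<tau>}"

definition K4s :: "'a set set" where
  "K4s = {A. A \<subseteq> V \<and> card A = 4 \<and> (\<forall>x\<in>A. \<forall>y\<in>A. x \<noteq> y \<longrightarrow> adj x y)}"

definition nbhd :: "'a \<Rightarrow> 'a set" where
  "nbhd u = {y \<in> V. adj u y}"

lemma light_edge_in_E: "e \<in> light_edges \<Longrightarrow> e \<in> E"
  by (simp add: light_edges_def)

lemma finite_light_edges: "finite light_edges"
  using finite_E by (simp add: light_edges_def)

lemma light_edge_triangle:
  assumes "e \<in> light_edges"
  obtains \<tau> where "{\<tau>' \<in> Tri. e \<subseteq> \<tau>'} = {\<tau>}"
  using assms by (auto simp: light_edges_def card_1_singleton_iff)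

lemma light_edge_unique_triangle:
  assumes "e \<in> light_edges" "\<tau>1 \<in> Tri" "\<tau>2 \<in> Tri" "e \<subseteq> \<tau>1" "e \<subseteq> \<tau>2"
  shows "\<tau>1 = \<tau>2"
  using assms by (metis (no_types, lifting) light_edge_triangle mem_Collect_eq singletonD)

lemma light_triangles_subset: "light_triangles \<subseteq> Tri"
  by (auto simp: light_triangles_def)

lemma finite_light_triangles: "finite light_triangles"
  using finite_subset[OF light_triangles_subset finite_triangles[OF finite_V]] .

lemma second_triangle_on_edge:
  assumes "adj x y" "adj x z" "adj y z" "{x, y} \<notin> light_edges"
  obtains w where "adj x w" "adj y w" "w \<noteq> z"
proof -
  let ?S = "{\<tau> \<in> Tri. {x, y} \<subseteq> \<tau>}"
  have "{x, y, z} \<in> ?S" using triangleI[OF assms(1,3,2)] by simp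
  moreover have "card ?S \<noteq> 1" using assms(1,4) unfolding light_edges_def adj_def by blast
  moreover have "finite ?S" using finite_triangles[OF finite_V] by simp
  ultimately have "\<not> card ?S \<le> 1" by (metis card_0_eq empty_iff le_SucE One_nat_def le_zero_eq)
  then obtain \<tau> where "\<tau> \<in> ?S" "\<tau> \<noteq> {x, y, z}"
    using \<open>finite ?S\<close> by (metis (no_types, lifting) One_nat_def card_le_Suc0_iff_eq)
  then have \<tau>: "\<tau> \<in> Tri" "x \<in> \<tau>" "y \<in> \<tau>" "\<tau> \<noteq> {x, y, z}" by auto
  obtain w where "\<tau> = {x, y, w}" "adj x w" "adj y w"
    using triangle_third_vertex[OF \<tau>(1-3) adj_neq[OF assms(1)]] .
  then show thesis using that \<tau>(4) by blast
qed

text \<open>If neither \<open>xy\<close> nor \<open>yz\<close> were light, the second triangles on them would give a path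
  \<open>w x z u\<close> in the neighbourhood of \<open>y\<close>; \<open>w \<noteq> u\<close> because \<open>xz\<close> lies in only one triangle.\<close>
lemma other_light_edge_in_triangle:
  assumes "adj x y" "adj y z" "adj x z" "{x, z} \<in> light_edges"
  shows "{x, y} \<in> light_edges \<or> {y, z} \<in> light_edges"
proof (rule ccontr)
  assume "\<not> ?thesis"
  then have "{x, y} \<notin> light_edges" "{z, y} \<notin> light_edges" by (auto simp: insert_commute)
  obtain w where w: "adj x w" "adj y w" "w \<noteq> z"
    using second_triangle_on_edge[OF assms(1,3,2) \<open>{x, y} \<notin> _\<close>] .
  have "adj z y" "adj z x" "adj y x" using assms(1-3) by (simp_all add: adj_sym)
  then obtain u where u: "adj z u" "adj y u" "u \<noteq> x"
    using second_triangle_on_edge[of z y x] \<open>{z, y} \<notin> _\<close> by blast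
  have "w \<noteq> u"
  proof
    assume "w = u"
    then have "{x, z, w} = {x, z, y}"
      using w u assms by (intro light_edge_unique_triangle[OF assms(4)] triangleI) (auto simp: adj_sym)
    then have "w \<in> {x, z, y}" by (metis insertCI)
    then have "w = y" using w(3) adj_neq[OF w(1)] by auto
    then show False using adj_neq[OF w(2)] by simp
  qed
  moreover have "y \<noteq> w" "y \<noteq> u" "x \<noteq> w" "z \<noteq> u" "x \<noteq> y" "y \<noteq> z" "x \<noteq> z"
    using w u assms by (simp_all add: adj_neq)
  ultimately have "distinct [y, w, x, z, u]" using w(3) u(3) by auto
  then show False
    using no_gem[of y w x z u] w u assms by (simp add: adj_sym)
qed

lemma triangle_second_light_edge:
  assumes "\<tau> \<in> Tri" "a \<in> \<tau>" "b \<in> \<tau>" "a \<noteq> b" "{a, b} \<in> light_edges"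
  obtains e where "e \<in> light_edges" "e \<subseteq> \<tau>" "e \<noteq> {a, b}"
proof -
  obtain c where c: "\<tau> = {a, b, c}" "c \<noteq> a" "c \<noteq> b" "adj a c" "adj b c"
    using triangle_third_vertex[OF assms(1-4)] .
  have "adj c b" "adj a b" using c(5) triangle_adj[OF assms(1-4)] by (simp_all add: adj_sym)
  then have "{a, c} \<in> light_edges \<or> {c, b} \<in> light_edges"
    using other_light_edge_in_triangle[OF c(4) _ _ assms(5)] by blast
  moreover have "{a, c} \<noteq> {a, b}" "{c, b} \<noteq> {a, b}" using c by (auto simp: doubleton_eq_iff)
  ultimately show thesis using that c(1) by blast
qed

lemma K4_adj: "A \<in> K4s \<Longrightarrow> x \<in> A \<Longrightarrow> y \<in> A \<Longrightarrow> x \<noteq> y \<Longrightarrow> adj x y"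
  by (simp add: K4s_def)

lemma card_K4: "A \<in> K4s \<Longrightarrow> card A = 4"
  by (simp add: K4s_def)

lemma finite_K4: "A \<in> K4s \<Longrightarrow> finite A"
  using card_K4 card.infinite by fastforce

lemma K4_subset_V: "A \<in> K4s \<Longrightarrow> A \<subseteq> V"
  by (simp add: K4s_def)

lemma finite_K4s: "finite K4s"
  by (rule finite_subset[of _ "Pow V"]) (use finite_V in \<open>auto simp: K4s_def\<close>)

lemma K4I:
  assumes "adj a b" "adj a c" "adj a d" "adj b c" "adj b d" "adj c d"
  shows "{a, b, c, d} \<in> K4s"
proof -
  have "a \<noteq> b" "a \<noteq> c" "a \<noteq> d" "b \<noteq> c" "b \<noteq> d" "c \<noteq> d"
    using assms by (simp_all add: adj_neq)
  then have "card {a, b, c, d} = 4" by simp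
  moreover have "\<forall>x\<in>{a, b, c, d}. \<forall>y\<in>{a, b, c, d}. x \<noteq> y \<longrightarrow> adj x y"
    using assms adj_sym by blast
  ultimately show ?thesis using assms adj_in_V by (simp add: K4s_def)
qed

lemma K4_other_vertices:
  assumes "A \<in> K4s" "a \<in> A" "b \<in> A" "a \<noteq> b"
  obtains c d where "A = {a, b, c, d}" "distinct [a, b, c, d]"
proof -
  have "card (A - {a, b}) = 2" using assms by (simp add: card_K4 card_Diff_subset)
  then obtain c d where cd: "A - {a, b} = {c, d}" "c \<noteq> d" by (meson card_2_iff)
  then have "A = {a, b, c, d}" using assms(2,3) by auto
  moreover have "distinct [a, b, c, d]" using cd assms(4) by auto
  ultimately show thesis using that by blast
qed

text \<open>The apexes \<open>w\<close>, \<open>u\<close> of second triangles on \<open>xy\<close> and \<open>xz\<close> coincide, since otherwise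
  \<open>x\<close> would see the path \<open>w y z u\<close>; then \<open>x y z w\<close> is a \<open>K\<^sub>4\<close>.\<close>
lemma heavy_triangle_in_K4:
  assumes "\<tau> \<in> Tri" "\<tau> \<notin> light_triangles"
  obtains A where "A \<in> K4s" "\<tau> \<subseteq> A"
proof -
  obtain x y z where t: "\<tau> = {x, y, z}" "adj x y" "adj y z" "adj x z"
    using assms(1) triangle_iff by auto
  have "{x, y} \<subseteq> \<tau>" "{x, z} \<subseteq> \<tau>" using t(1) by auto
  then have "{x, y} \<notin> light_edges" "{x, z} \<notin> light_edges"
    using assms unfolding light_triangles_def by blast+
  obtain w where w: "adj x w" "adj y w" "w \<noteq> z"
    using second_triangle_on_edge[OF t(2,4,3) \<open>{x, y} \<notin> _\<close>] .
  have "adj z y" using t(3) by (simp add: adj_sym)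
  obtain u where u: "adj x u" "adj z u" "u \<noteq> y"
    using second_triangle_on_edge[OF t(4,2) \<open>adj z y\<close> \<open>{x, z} \<notin> _\<close>] .
  show thesis
  proof (cases "u = w")
    case True
    then have "{x, y, z, w} \<in> K4s" using t w u by (intro K4I) simp_all
    then show thesis using that t(1) by blast
  next
    case False
    have "x \<noteq> w" "x \<noteq> u" "y \<noteq> w" "z \<noteq> u" "x \<noteq> y" "y \<noteq> z" "x \<noteq> z"
      using w u t by (simp_all add: adj_neq)
    then have "distinct [x, w, y, z, u]" using w(3) u(3) False by auto
    then show thesis
      using no_gem[of x w y z u] t w u by (simp add: adj_sym)
  qed
qed

end

context gem_free
begin

lemma common_nbr_of_K4_edge_in_K4:
  assumes "A \<in> K4s" "a \<in> A" "b \<in> A" "a \<noteq> b" "adj u a" "adj u b"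
  shows "u \<in> A"
proof (rule ccontr)
  assume "u \<notin> A"
  obtain c d where cd: "A = {a, b, c, d}" "distinct [a, b, c, d]"
    using K4_other_vertices[OF assms(1-4)] .
  then have "adj a b" "adj a c" "adj a d" "adj b c" "adj c d"
    using K4_adj[OF assms(1)] by auto
  moreover have "distinct [a, u, b, c, d]" using cd \<open>u \<notin> A\<close> by auto
  ultimately show False
    using no_gem[of a u b c d] assms(5,6) by (simp add: adj_sym)
qed

lemma card_nbhd_Int_K4:
  assumes "A \<in> K4s" "u \<notin> A"
  shows "card (nbhd u \<inter> A) \<le> 1"
  using finite_K4[OF assms(1)] common_nbr_of_K4_edge_in_K4[OF assms(1)] assms(2)
  by (auto simp: nbhd_def card_le_Suc0_iff_eq)

lemma card_Int_K4s:
  assumes "A \<in> K4s" "B \<in> K4s" "A \<noteq> B"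
  shows "card (A \<inter> B) \<le> 1"
proof (rule ccontr)
  assume "\<not> ?thesis"
  then obtain a b where ab: "a \<in> A \<inter> B" "b \<in> A \<inter> B" "a \<noteq> b"
    using finite_K4[OF assms(1)] by (auto simp: card_le_Suc0_iff_eq)
  have "\<not> B \<subseteq> A"
    using assms card_subset_eq[OF finite_K4[OF assms(1)]] card_K4 by metis
  then obtain c where c: "c \<in> B" "c \<notin> A" by blast
  then have "adj c a" "adj c b" using ab K4_adj[OF assms(2)] by auto
  then show False using common_nbr_of_K4_edge_in_K4[OF assms(1)] ab c by blast
qed

text \<open>With \<open>x'\<close>, \<open>y'\<close> further vertices of the two cliques outside the other one, \<open>p\<close> would
  see the path \<open>x' x y y'\<close>.\<close>
lemma K4s_sharing_vertex_no_edge: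
  assumes "A \<in> K4s" "B \<in> K4s" "p \<in> A \<inter> B" "x \<in> A - B" "y \<in> B - A"
  shows "\<not> adj x y"
proof
  assume "adj x y"
  have "A \<noteq> B" using assms(4) assms(5) by blast
  have AB: "card (A \<inter> B) \<le> 1" using card_Int_K4s[OF assms(1,2) \<open>A \<noteq> B\<close>] .
  have "x \<noteq> p" "y \<noteq> p" using assms(3-5) by auto
  obtain x' x'' where x': "A = {p, x, x', x''}" "distinct [p, x, x', x'']"
    using K4_other_vertices[OF assms(1) _ _ \<open>x \<noteq> p\<close>[symmetric]] assms(3,4) by blast
  obtain y' y'' where y': "B = {p, y, y', y''}" "distinct [p, y, y', y'']"
    using K4_other_vertices[OF assms(2) _ _ \<open>y \<noteq> p\<close>[symmetric]] assms(3,5) by blast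
  have "x' \<notin> B"
  proof
    assume "x' \<in> B"
    then have "{p, x'} \<subseteq> A \<inter> B" using assms(3) x' by auto
    then show False
      using card_mono[OF finite_Int[OF disjI1, OF finite_K4[OF assms(1)]]] AB x' by fastforce
  qed
  have "y' \<notin> A"
  proof
    assume "y' \<in> A"
    then have "{p, y'} \<subseteq> A \<inter> B" using assms(3) y' by auto
    then show False
      using card_mono[OF finite_Int[OF disjI1, OF finite_K4[OF assms(1)]]] AB y' by fastforce
  qed
  have "adj p x'" "adj p x" "adj x' x" using K4_adj[OF assms(1)] x' by auto
  moreover have "adj p y" "adj p y'" "adj y y'" using K4_adj[OF assms(2)] y' by auto
  moreover have "distinct [p, x', x, y, y']"
    using x' y' assms(4,5) \<open>x' \<notin> B\<close> \<open>y' \<notin> A\<close> by auto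
  ultimately show False using no_gem[of p x' x y y'] \<open>adj x y\<close> by blast
qed

lemma K4_edge_not_light:
  assumes "A \<in> K4s" "x \<in> A" "y \<in> A" "x \<noteq> y"
  shows "{x, y} \<notin> light_edges"
proof
  assume "{x, y} \<in> light_edges"
  obtain c d where cd: "A = {x, y, c, d}" "distinct [x, y, c, d]"
    using K4_other_vertices[OF assms] .
  have "{x, y, c} \<in> Tri" "{x, y, d} \<in> Tri"
    using K4_adj[OF assms(1)] cd by (auto intro!: triangleI)
  then have "{x, y, c} = {x, y, d}"
    using light_edge_unique_triangle[OF \<open>{x, y} \<in> light_edges\<close>] by blast
  then show False using cd by auto
qed

lemma card_light_triangle_Int_K4:
  assumes "\<tau> \<in> light_triangles" "A \<in> K4s"
  shows "card (\<tau> \<inter> A) \<le> 1"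
proof (rule ccontr)
  assume "\<not> ?thesis"
  then obtain x y where xy: "x \<in> \<tau> \<inter> A" "y \<in> \<tau> \<inter> A" "x \<noteq> y"
    using finite_K4[OF assms(2)] by (auto simp: card_le_Suc0_iff_eq)
  have \<tau>: "\<tau> \<in> Tri" using assms(1) light_triangles_subset by blast
  obtain z where z: "\<tau> = {x, y, z}" "adj x z" "adj y z"
    using triangle_third_vertex[OF \<tau>, of x y] xy by blast
  have "z \<in> A"
    using common_nbr_of_K4_edge_in_K4[OF assms(2), of x y z] xy z by (simp add: adj_sym)
  then have "\<tau> \<subseteq> A" using z xy by auto
  moreover obtain e where "e \<in> light_edges" "e \<subseteq> \<tau>"
    using assms(1) by (auto simp: light_triangles_def)
  moreover obtain a b where "e = {a, b}" "adj a b"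
    using edgeE[OF light_edge_in_E[OF \<open>e \<in> light_edges\<close>]] .
  ultimately show False
    using K4_edge_not_light[OF assms(2), of a b] adj_neq by auto
qed

end

section \<open>Counting triangles\<close>

context gem_free
begin

lemma card_triangles_le: "card Tri \<le> 4 * card K4s + card light_triangles"
proof -
  let ?H = "\<Union>A\<in>K4s. {\<tau>. \<tau> \<subseteq> A \<and> card \<tau> = 3}"
  have "Tri \<subseteq> light_triangles \<union> ?H"
  proof
    fix \<tau> assume "\<tau> \<in> Tri"
    show "\<tau> \<in> light_triangles \<union> ?H"
    proof (cases "\<tau> \<in> light_triangles")
      case False
      then obtain A where "A \<in> K4s" "\<tau> \<subseteq> A" using heavy_triangle_in_K4 \<open>\<tau> \<in> Tri\<close> by blast
      then show ?thesis using card_triangle[OF \<open>\<tau> \<in> Tri\<close>] by blast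
    qed simp
  qed
  moreover have "finite ?H" using finite_K4s finite_K4 by simp
  ultimately have "card Tri \<le> card (light_triangles \<union> ?H)"
    using finite_light_triangles by (intro card_mono) auto
  also have "\<dots> \<le> card light_triangles + card ?H" by (rule card_Un_le)
  also have "card ?H \<le> (\<Sum>A\<in>K4s. card {\<tau>. \<tau> \<subseteq> A \<and> card \<tau> = 3})"
    using finite_K4s by (rule card_UN_le)
  also have "\<dots> = (\<Sum>A\<in>K4s. 4)"
    using n_subsets[OF finite_K4] card_K4 by (intro sum.cong) (simp_all add: numeral_eq_Suc)
  finally show ?thesis by simp
qed

lemma all_light_triangles_subset: "triangles V light_edges \<subseteq> light_triangles"
proof
  fix \<tau> assume \<tau>: "\<tau> \<in> triangles V light_edges"
  then have "\<tau> \<in> Tri"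
    using triangles_mono[of V V light_edges E] light_edge_in_E by blast
  moreover obtain x y z where "\<tau> = {x, y, z}" "x \<noteq> y"
    using \<tau> unfolding triangles_def card_3_iff by blast
  moreover have "{x, y} \<in> light_edges"
    using \<tau> calculation(2,3) unfolding triangles_def by blast
  moreover have "{x, y} \<subseteq> \<tau>" using calculation(2) by blast
  ultimately show "\<tau> \<in> light_triangles"
    unfolding light_triangles_def by (intro CollectI conjI bexI)
qed

text \<open>Every light edge lies in exactly one triangle, and that triangle contains two light edges,
  or three when all of its edges are light.\<close>
lemma card_light_edges_ge:
  "2 * card light_triangles + card (triangles V light_edges) \<le> card light_edges"
proof -
  define f where "f \<tau> = {e \<in> light_edges. e \<subseteq> \<tau>}" for \<tau>
  have partition: "light_edges = (\<Union>\<tau>\<in>light_triangles. f \<tau>)"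
  proof
    show "light_edges \<subseteq> (\<Union>\<tau>\<in>light_triangles. f \<tau>)"
    proof
      fix e assume e: "e \<in> light_edges"
      then obtain \<tau> where "{\<tau>' \<in> Tri. e \<subseteq> \<tau>'} = {\<tau>}" by (rule light_edge_triangle)
      then have "\<tau> \<in> Tri" "e \<subseteq> \<tau>" by auto
      then show "e \<in> (\<Union>\<tau>\<in>light_triangles. f \<tau>)" using e by (auto simp: f_def light_triangles_def)
    qed
  qed (auto simp: f_def)
  have "card light_edges = (\<Sum>\<tau>\<in>light_triangles. card (f \<tau>))"
    unfolding partition
  proof (rule card_UN_disjoint[OF finite_light_triangles])
    show "\<forall>\<tau>\<in>light_triangles. finite (f \<tau>)" using finite_light_edges by (simp add: f_def)
    show "\<forall>\<tau>\<in>light_triangles. \<forall>\<tau>'\<in>light_triangles. \<tau> \<noteq> \<tau>' \<longrightarrow> f \<tau> \<inter> f \<tau>' = {}"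
      using light_edge_unique_triangle light_triangles_subset unfolding f_def by blast
  qed
  moreover have "2 + (if \<tau> \<in> triangles V light_edges then 1 else 0) \<le> card (f \<tau>)"
    if light: "\<tau> \<in> light_triangles" for \<tau>
  proof -
    have fin: "finite (f \<tau>)" using finite_light_edges by (simp add: f_def)
    have \<tau>: "\<tau> \<in> Tri" using light light_triangles_subset by blast
    show ?thesis
    proof (cases "\<tau> \<in> triangles V light_edges")
      case False
      obtain e where e: "e \<in> light_edges" "e \<subseteq> \<tau>" using light by (auto simp: light_triangles_def)
      obtain a b where ab: "e = {a, b}" "adj a b" using edgeE[OF light_edge_in_E[OF e(1)]] .
      obtain e' where e': "e' \<in> light_edges" "e' \<subseteq> \<tau>" "e' \<noteq> e"
        using triangle_second_light_edge[OF \<tau>, of a b] e ab adj_neq[OF ab(2)] by auto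
      have "card {e, e'} \<le> card (f \<tau>)" using e e' fin by (intro card_mono) (auto simp: f_def)
      then show ?thesis using False e' by simp
    next
      case True
      then obtain x y z where xyz: "\<tau> = {x, y, z}" "x \<noteq> y" "y \<noteq> z" "x \<noteq> z"
        by (auto simp: triangles_def card_3_iff)
      have "{{x, y}, {y, z}, {x, z}} \<subseteq> f \<tau>"
        using True xyz by (auto simp: triangles_def f_def)
      then have "card {{x, y}, {y, z}, {x, z}} \<le> card (f \<tau>)" using fin by (intro card_mono)
      moreover have "card {{x, y}, {y, z}, {x, z}} = 3" using xyz by (auto simp: doubleton_eq_iff)
      ultimately show ?thesis using True by simp
    qed
  qed
  then have "(\<Sum>\<tau>\<in>light_triangles. 2 + (if \<tau> \<in> triangles V light_edges then 1 else 0))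
      \<le> (\<Sum>\<tau>\<in>light_triangles. card (f \<tau>))"
    by (rule sum_mono)
  moreover have "(\<Sum>\<tau>\<in>light_triangles. 2 + (if \<tau> \<in> triangles V light_edges then 1 else 0))
      = 2 * card light_triangles + card (triangles V light_edges)"
  proof -
    have "(\<Sum>\<tau>\<in>light_triangles. if \<tau> \<in> triangles V light_edges then 1 else 0::nat)
        = card (light_triangles \<inter> triangles V light_edges)"
      using finite_light_triangles by (simp add: sum.If_cases)
    moreover have "light_triangles \<inter> triangles V light_edges = triangles V light_edges"
      using all_light_triangles_subset by blast
    ultimately show ?thesis by (simp only: sum.distrib) simp
  qed
  ultimately show ?thesis by simp
qed

text \<open>The light edges outside \<open>U\<close> form a graph to which Mantel's bound applies, and its
  triangles are triangles of light edges; the remaining light edges lie inside \<open>U\<close> or join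
  \<open>V - U\<close> to \<open>U\<close>.\<close>
lemma light_triangles_bound:
  assumes "\<And>w. w \<in> V - U \<Longrightarrow> card (nbhd w \<inter> U) \<le> c"
  shows "8 * card light_triangles
    \<le> card (V - U) ^ 2 + 4 * c * card (V - U) + 4 * card {e \<in> light_edges. e \<subseteq> U}"
proof -
  define W where "W = V - U"
  define LW where "LW = {e \<in> light_edges. e \<subseteq> W}"
  define LU where "LU = {e \<in> light_edges. e \<subseteq> U}"
  define X where "X = (\<Union>w\<in>W. (\<lambda>u. {w, u}) ` (nbhd w \<inter> U))"
  have finW: "finite W" using finite_V by (simp add: W_def)
  have "simple_graph W LW"
    using finW edgeD light_edge_in_E by (auto simp: LW_def simple_graph_def)
  then have "4 * card LW \<le> card W ^ 2 + 4 * card (triangles W LW)"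
    by (rule mantel_with_triangles)
  moreover have "card (triangles W LW) \<le> card (triangles V light_edges)"
    using finite_triangles[OF finite_V]
    by (intro card_mono triangles_mono) (auto simp: W_def LW_def)
  ultimately have mantel: "4 * card LW \<le> card W ^ 2 + 4 * card (triangles V light_edges)"
    by linarith
  have "light_edges \<subseteq> LW \<union> LU \<union> X"
  proof
    fix e assume e: "e \<in> light_edges"
    obtain a b where ab: "e = {a, b}" "adj a b" by (rule edgeE[OF light_edge_in_E[OF e]])
    then have "a \<in> V" "b \<in> V" using adj_in_V by auto
    then consider "a \<in> W" "b \<in> W" | "a \<in> U" "b \<in> U" | "a \<in> W" "b \<in> U" | "b \<in> W" "a \<in> U"
      by (auto simp: W_def)
    then show "e \<in> LW \<union> LU \<union> X"
    proof cases
      case 3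
      then have "e \<in> X" using ab \<open>b \<in> V\<close> by (auto simp: X_def nbhd_def)
      then show ?thesis by blast
    next
      case 4
      moreover have "adj b a" "e = {b, a}" using ab by (simp_all add: adj_sym insert_commute)
      ultimately have "e \<in> X" using \<open>a \<in> V\<close> by (auto simp: X_def nbhd_def)
      then show ?thesis by blast
    qed (use e ab in \<open>auto simp: LW_def LU_def\<close>)
  qed
  moreover have "finite X" using finW finite_V by (auto simp: X_def nbhd_def)
  ultimately have "card light_edges \<le> card (LW \<union> LU \<union> X)"
    using finite_light_edges by (intro card_mono) (auto simp: LW_def LU_def)
  also have "\<dots> \<le> card LW + card LU + card X"
    by (meson add_le_mono1 card_Un_le le_trans)
  also have "card X \<le> (\<Sum>w\<in>W. card ((\<lambda>u. {w, u}) ` (nbhd w \<inter> U)))"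
    unfolding X_def using finW by (rule card_UN_le)
  also have "\<dots> \<le> (\<Sum>w\<in>W. c)"
  proof (rule sum_mono)
    fix w assume "w \<in> W"
    have "card ((\<lambda>u. {w, u}) ` (nbhd w \<inter> U)) \<le> card (nbhd w \<inter> U)"
      using finite_V by (intro card_image_le) (simp add: nbhd_def)
    also have "\<dots> \<le> c" using assms \<open>w \<in> W\<close> by (simp add: W_def)
    finally show "card ((\<lambda>u. {w, u}) ` (nbhd w \<inter> U)) \<le> c" .
  qed
  finally have "card light_edges \<le> card LW + card LU + c * card W" by (simp add: mult.commute)
  then show ?thesis
    using card_light_edges_ge mantel unfolding W_def[symmetric] LU_def[symmetric] by linarith
qed

lemma card_nbhd_Int_Union_K4s:
  assumes "\<A> \<subseteq> K4s" "w \<notin> \<Union>\<A>"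
  shows "card (nbhd w \<inter> \<Union>\<A>) \<le> card \<A>"
proof -
  have "finite \<A>" using finite_subset[OF assms(1) finite_K4s] .
  have "nbhd w \<inter> \<Union>\<A> = (\<Union>A\<in>\<A>. nbhd w \<inter> A)" by blast
  then have "card (nbhd w \<inter> \<Union>\<A>) = card (\<Union>A\<in>\<A>. nbhd w \<inter> A)" by simp
  also have "\<dots> \<le> (\<Sum>A\<in>\<A>. card (nbhd w \<inter> A))" using \<open>finite \<A>\<close> by (rule card_UN_le)
  also have "\<dots> \<le> (\<Sum>A\<in>\<A>. 1)"
  proof (rule sum_mono)
    fix A assume "A \<in> \<A>"
    then show "card (nbhd w \<inter> A) \<le> 1" using assms by (intro card_nbhd_Int_K4) auto
  qed
  finally show ?thesis by simp
qed

end

section \<open>Configurations of \<open>K\<^sub>4\<close>'s\<close>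

lemma rainbow_of_three_parts:
  assumes "finite S" "3 \<le> card S" "S \<subseteq> A \<union> B \<union> C"
    and "card (S \<inter> A) \<le> 1" "card (S \<inter> B) \<le> 1" "card (S \<inter> C) \<le> 1"
  obtains x y z where "x \<in> S" "y \<in> S" "z \<in> S"
    and "x \<in> A - (B \<union> C)" "y \<in> B - (A \<union> C)" "z \<in> C - (A \<union> B)"
proof -
  have S: "S = (S \<inter> A) \<union> (S \<inter> B) \<union> (S \<inter> C)" using assms(3) by blast
  have "card S \<le> card (S \<inter> A) + card (S \<inter> B) + card (S \<inter> C)"
    by (subst S) (meson add_le_mono1 card_Un_le le_trans)
  then have "card (S \<inter> A) = 1" "card (S \<inter> B) = 1" "card (S \<inter> C) = 1"
    using assms(2,4-6) by linarith+
  then obtain x y z where xyz: "S \<inter> A = {x}" "S \<inter> B = {y}" "S \<inter> C = {z}"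
    by (metis card_1_singletonE)
  then have "S = {x, y, z}" using S by auto
  then have "distinct [x, y, z]" using assms(2) by (auto simp: card_insert_if split: if_splits)
  then show thesis
    using that xyz by (metis Diff_iff Int_iff Un_iff distinct_length_2_or_more singletonD singletonI)
qed

context gem_free
begin

lemma light_edge_joins_disjoint_K4s:
  assumes "A \<in> K4s" "B \<in> K4s" "e \<in> light_edges" "e \<subseteq> A \<union> B"
  obtains a b where "A \<inter> B = {}" "a \<in> A" "b \<in> B" "e = {a, b}" "adj a b"
proof -
  obtain x y where xy: "e = {x, y}" "adj x y" by (rule edgeE[OF light_edge_in_E[OF assms(3)]])
  have "\<not> (x \<in> A \<and> y \<in> A)" "\<not> (x \<in> B \<and> y \<in> B)"
    using K4_edge_not_light[OF assms(1)] K4_edge_not_light[OF assms(2)] assms(3) xy adj_neq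
    by blast+
  moreover have "x \<in> A \<union> B" "y \<in> A \<union> B" using assms(4) xy by auto
  ultimately consider "x \<in> A - B" "y \<in> B - A" | "y \<in> A - B" "x \<in> B - A" by blast
  then show thesis
  proof cases
    case 1
    then have "A \<inter> B = {}" using K4s_sharing_vertex_no_edge[OF assms(1,2)] xy(2) by blast
    then show thesis using that 1 xy by blast
  next
    case 2
    moreover have "adj y x" using xy(2) by (simp add: adj_sym)
    ultimately have "A \<inter> B = {}" using K4s_sharing_vertex_no_edge[OF assms(1,2)] by blast
    then show thesis using that 2 \<open>adj y x\<close> xy(1) by (metis DiffD1 insert_commute)
  qed
qed

lemma no_light_edges_in_intersecting_K4s:
  assumes "A \<in> K4s" "B \<in> K4s" "A \<inter> B \<noteq> {}"
  shows "{e \<in> light_edges. e \<subseteq> A \<union> B} = {}"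
  using light_edge_joins_disjoint_K4s[OF assms(1,2)] assms(3) by blast

lemma card_light_edges_in_two_K4s:
  assumes "A \<in> K4s" "B \<in> K4s"
  shows "card {e \<in> light_edges. e \<subseteq> A \<union> B} \<le> 4"
proof (cases "A \<inter> B = {}")
  case False
  then show ?thesis using no_light_edges_in_intersecting_K4s[OF assms] by (metis card.empty zero_le)
next
  case True
  have "{e \<in> light_edges. e \<subseteq> A \<union> B} \<subseteq> (\<Union>b\<in>B. (\<lambda>a. {a, b}) ` (nbhd b \<inter> A))"
  proof
    fix e assume "e \<in> {e \<in> light_edges. e \<subseteq> A \<union> B}"
    then obtain a b where ab: "a \<in> A" "b \<in> B" "e = {a, b}" "adj a b"
      using light_edge_joins_disjoint_K4s[OF assms] by blast
    then have "a \<in> nbhd b \<inter> A" using adj_in_V by (auto simp: nbhd_def adj_sym)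
    then show "e \<in> (\<Union>b\<in>B. (\<lambda>a. {a, b}) ` (nbhd b \<inter> A))" using ab by blast
  qed
  then have "card {e \<in> light_edges. e \<subseteq> A \<union> B} \<le> card (\<Union>b\<in>B. (\<lambda>a. {a, b}) ` (nbhd b \<inter> A))"
    using finite_K4[OF assms(1)] finite_K4[OF assms(2)] by (intro card_mono) auto
  also have "\<dots> \<le> (\<Sum>b\<in>B. card ((\<lambda>a. {a, b}) ` (nbhd b \<inter> A)))"
    using finite_K4[OF assms(2)] by (rule card_UN_le)
  also have "\<dots> \<le> (\<Sum>b\<in>B. 1)"
  proof (rule sum_mono)
    fix b assume "b \<in> B"
    then have "card (nbhd b \<inter> A) \<le> 1" using True by (intro card_nbhd_Int_K4[OF assms(1)]) auto
    then show "card ((\<lambda>a. {a, b}) ` (nbhd b \<inter> A)) \<le> 1"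
      using card_image_le[of "nbhd b \<inter> A" "\<lambda>a. {a, b}"] finite_K4[OF assms(1)] by simp
  qed
  finally show ?thesis using card_K4[OF assms(2)] by simp
qed

end

context gem_free
begin

text \<open>If \<open>A\<close> and \<open>B\<close> share a vertex, \<open>C\<close> cannot meet both \<open>A - B\<close> and \<open>B - A\<close>, since the two
  meeting points would be adjacent.\<close>
lemma card_Un_three_K4s:
  assumes "A \<in> K4s" "B \<in> K4s" "C \<in> K4s" "A \<noteq> B" "A \<noteq> C" "B \<noteq> C"
  shows "10 \<le> card (A \<union> B \<union> C)"
proof -
  have fin: "finite A" "finite B" "finite C" using assms finite_K4 by auto
  have AB: "card (A \<union> B) + card (A \<inter> B) = 8"
    using card_Un_Int[OF fin(1,2)] card_K4 assms by simp
  have ABC: "card (A \<union> B \<union> C) + card ((A \<union> B) \<inter> C) = card (A \<union> B) + 4"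
    using card_Un_Int[of "A \<union> B" C] fin card_K4 assms by simp
  have meet: "card (A \<inter> B) \<le> 1" "card (A \<inter> C) \<le> 1" "card (B \<inter> C) \<le> 1"
    using card_Int_K4s assms by auto
  have "(A \<union> B) \<inter> C = (A \<inter> C) \<union> (B \<inter> C)" by blast
  then have meetC: "card ((A \<union> B) \<inter> C) \<le> 2" using meet card_Un_le
    by (metis add_mono le_trans one_add_one)
  show ?thesis
  proof (rule ccontr)
    assume "\<not> ?thesis"
    then have "card (A \<inter> B) = 1" "card ((A \<union> B) \<inter> C) = 2" using AB ABC meet meetC by linarith+
    then obtain p q r where p: "A \<inter> B = {p}" and qr: "(A \<union> B) \<inter> C = {q, r}" "q \<noteq> r"
      by (metis card_1_singletonE card_2_iff)
    have "adj q r" using K4_adj[OF assms(3)] qr by blast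
    have "\<not> (q \<in> A \<and> r \<in> A)" "\<not> (q \<in> B \<and> r \<in> B)"
      using card_mono[of "A \<inter> C" "{q, r}"] card_mono[of "B \<inter> C" "{q, r}"] fin meet qr by auto
    then consider "q \<in> A - B" "r \<in> B - A" | "r \<in> A - B" "q \<in> B - A" using qr by blast
    then show False
    proof cases
      case 1
      then show False using K4s_sharing_vertex_no_edge[OF assms(1,2)] p \<open>adj q r\<close> by blast
    next
      case 2
      then show False using K4s_sharing_vertex_no_edge[OF assms(1,2)] p \<open>adj q r\<close>
        by (metis adj_sym insertI1)
    qed
  qed
qed

lemma card_V_ge_12_if_rainbow_clique:
  assumes "A \<in> K4s" "B \<in> K4s" "C \<in> K4s"
    and "finite S" "3 \<le> card S" "S \<subseteq> A \<union> B \<union> C"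
    and "card (S \<inter> A) \<le> 1" "card (S \<inter> B) \<le> 1" "card (S \<inter> C) \<le> 1"
    and "\<And>x y. x \<in> S \<Longrightarrow> y \<in> S \<Longrightarrow> x \<noteq> y \<Longrightarrow> adj x y"
  shows "12 \<le> card V"
proof -
  obtain x y z where "x \<in> S" "y \<in> S" "z \<in> S"
    and xyz: "x \<in> A - (B \<union> C)" "y \<in> B - (A \<union> C)" "z \<in> C - (A \<union> B)"
    using rainbow_of_three_parts[OF assms(4-9)] .
  then have "adj x y" "adj x z" "adj y z" using assms(10) by blast+
  then have "A \<inter> B = {}" "A \<inter> C = {}" "B \<inter> C = {}"
    using K4s_sharing_vertex_no_edge assms(1-3) xyz by blast+
  then have "card (A \<union> B \<union> C) = 12"
    using assms(1-3) card_K4 finite_K4 by (simp add: card_Un_disjoint Int_Un_distrib2)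
  moreover have "card (A \<union> B \<union> C) \<le> card V"
    using assms(1-3) K4_subset_V finite_V by (intro card_mono) auto
  ultimately show ?thesis by simp
qed

lemma card_K4s_le_3:
  assumes "card V \<le> 11"
  shows "card K4s \<le> 3"
proof (rule ccontr)
  assume "\<not> ?thesis"
  then have "3 \<le> card K4s" by simp
  then obtain \<A> where "\<A> \<subseteq> K4s" "card \<A> = 3" by (rule obtain_subset_with_card_n)
  then obtain A B C where ABC: "\<A> = {A, B, C}" "A \<noteq> B" "A \<noteq> C" "B \<noteq> C" by (meson card_3_iff)
  have K: "A \<in> K4s" "B \<in> K4s" "C \<in> K4s" using ABC \<open>\<A> \<subseteq> K4s\<close> by auto
  have "\<not> K4s \<subseteq> \<A>"
  proof
    assume "K4s \<subseteq> \<A>"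
    then have "card K4s \<le> card \<A>" using finite_subset[OF \<open>\<A> \<subseteq> K4s\<close> finite_K4s] by (rule card_mono[rotated])
    then show False using \<open>card \<A> = 3\<close> \<open>\<not> card K4s \<le> 3\<close> by simp
  qed
  then obtain D where D: "D \<in> K4s" "D \<notin> \<A>" by blast
  define U where "U = A \<union> B \<union> C"
  have "U \<subseteq> V" using K K4_subset_V by (auto simp: U_def)
  have "card (D - U) \<le> card (V - U)" using K4_subset_V[OF D(1)] finite_V by (intro card_mono) auto
  also have "\<dots> = card V - card U" using \<open>U \<subseteq> V\<close> finite_V by (meson card_Diff_subset finite_subset)
  also have "\<dots> \<le> 1" using card_Un_three_K4s[OF K ABC(2-4)] assms by (simp add: U_def)
  finally have "3 \<le> card (D \<inter> U)"
    using card_Int_Diff[OF finite_K4[OF D(1)], of U] card_K4[OF D(1)] by linarith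
  have "card (D \<inter> U \<inter> X) \<le> 1" if "X \<in> \<A>" for X
  proof -
    have "card (D \<inter> U \<inter> X) \<le> card (D \<inter> X)" using finite_K4[OF D(1)] by (intro card_mono) auto
    also have "\<dots> \<le> 1" using card_Int_K4s[OF D(1)] that D \<open>\<A> \<subseteq> K4s\<close> by blast
    finally show ?thesis .
  qed
  then have "card (D \<inter> U \<inter> A) \<le> 1" "card (D \<inter> U \<inter> B) \<le> 1" "card (D \<inter> U \<inter> C) \<le> 1"
    using ABC(1) by simp_all
  moreover have "finite (D \<inter> U)" "D \<inter> U \<subseteq> A \<union> B \<union> C"
    using finite_K4[OF D(1)] by (auto simp: U_def)
  ultimately have "12 \<le> card V"
    using card_V_ge_12_if_rainbow_clique[OF K, of "D \<inter> U"] \<open>3 \<le> card (D \<inter> U)\<close> K4_adj[OF D(1)]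
    by blast
  then show False using assms by simp
qed

end

context gem_free
begin

lemma Union_K4s_subset_V: "\<Union>K4s \<subseteq> V"
  using K4_subset_V by blast

lemma light_triangles_bound_K4s:
  "8 * card light_triangles \<le> card (V - \<Union>K4s) ^ 2 + 4 * card K4s * card (V - \<Union>K4s)
    + 4 * card {e \<in> light_edges. e \<subseteq> \<Union>K4s}"
  by (rule light_triangles_bound, rule card_nbhd_Int_Union_K4s) auto

lemma light_triangle_not_subset_Union_K4s:
  assumes "card V \<le> 11" "\<tau> \<in> light_triangles"
  shows "\<not> \<tau> \<subseteq> \<Union>K4s"
proof
  assume sub: "\<tau> \<subseteq> \<Union>K4s"
  have \<tau>: "\<tau> \<in> Tri" using assms(2) light_triangles_subset by blast
  have "3 = card (\<Union>A\<in>K4s. \<tau> \<inter> A)"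
    using sub card_triangle[OF \<tau>] by (metis Int_Union Int_absorb2)
  also have "\<dots> \<le> (\<Sum>A\<in>K4s. card (\<tau> \<inter> A))" using finite_K4s by (rule card_UN_le)
  also have "\<dots> \<le> (\<Sum>A\<in>K4s. 1)"
    using card_light_triangle_Int_K4[OF assms(2)] by (intro sum_mono) blast
  finally have "card K4s = 3" using card_K4s_le_3[OF assms(1)] by simp
  then obtain A B C where "K4s = {A, B, C}" by (meson card_3_iff)
  then have "12 \<le> card V"
    using card_V_ge_12_if_rainbow_clique[of A B C \<tau>] sub finite_triangle[OF \<tau>] card_triangle[OF \<tau>]
      card_light_triangle_Int_K4[OF assms(2)] triangle_adj[OF \<tau>] by auto
  then show False using assms(1) by simp
qed

text \<open>With at most one vertex \<open>w\<close> outside the cliques, every light triangle is \<open>w\<close> plus two of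
  its neighbours, and \<open>w\<close> has at most one neighbour in each clique.\<close>
lemma card_light_triangles_le_outside:
  assumes "card V \<le> 11" "card (V - \<Union>K4s) \<le> 1"
  shows "card light_triangles \<le> card (V - \<Union>K4s) * (card K4s choose 2)"
proof (cases "V - \<Union>K4s = {}")
  case True
  then have "light_triangles = {}"
    using light_triangle_not_subset_Union_K4s[OF assms(1)] triangle_subset_V light_triangles_subset
    by blast
  then show ?thesis by simp
next
  case False
  then obtain w where w: "V - \<Union>K4s = {w}"
    using assms(2) finite_V by (metis card_1_singletonE card_0_eq finite_Diff le_SucE One_nat_def le_zero_eq)
  have "nbhd w \<subseteq> \<Union>K4s"
  proof
    fix x assume "x \<in> nbhd w"
    then have "x \<in> V" "x \<noteq> w" using adj_neq by (auto simp: nbhd_def)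
    then show "x \<in> \<Union>K4s" using w by blast
  qed
  moreover have "w \<notin> \<Union>K4s" using w by blast
  ultimately have "card (nbhd w) \<le> card K4s"
    using card_nbhd_Int_Union_K4s[of K4s w] by (simp add: Int_absorb2)
  have "light_triangles \<subseteq> insert w ` {S. S \<subseteq> nbhd w \<and> card S = 2}"
  proof
    fix \<tau> assume light: "\<tau> \<in> light_triangles"
    then have \<tau>: "\<tau> \<in> Tri" using light_triangles_subset by blast
    obtain x where "x \<in> \<tau>" "x \<notin> \<Union>K4s"
      using light_triangle_not_subset_Union_K4s[OF assms(1) light] by blast
    then have "x \<in> V - \<Union>K4s" using triangle_subset_V[OF \<tau>] by blast
    then have "w \<in> \<tau>" using w \<open>x \<in> \<tau>\<close> by simp
    then have "\<tau> - {w} \<subseteq> nbhd w" "card (\<tau> - {w}) = 2" "\<tau> = insert w (\<tau> - {w})"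
      using triangle_adj[OF \<tau>] triangle_subset_V[OF \<tau>] card_triangle[OF \<tau>] by (auto simp: nbhd_def)
    then show "\<tau> \<in> insert w ` {S. S \<subseteq> nbhd w \<and> card S = 2}" by blast
  qed
  moreover have fin: "finite (nbhd w)" using finite_V by (simp add: nbhd_def)
  ultimately have "card light_triangles \<le> card (insert w ` {S. S \<subseteq> nbhd w \<and> card S = 2})"
    by (intro card_mono) auto
  also have "\<dots> \<le> card {S. S \<subseteq> nbhd w \<and> card S = 2}"
    using fin by (intro card_image_le) auto
  also have "\<dots> = card (nbhd w) choose 2" using fin by (rule n_subsets)
  also have "\<dots> \<le> card K4s choose 2" by (rule binomial_right_mono) fact
  finally show ?thesis using w by simp
qed

lemma K4s_configurations:
  assumes "card V \<le> 11"
  defines "L \<equiv> card {e \<in> light_edges. e \<subseteq> \<Union>K4s}"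
  obtains "card K4s = 0" "card (\<Union>K4s) = 0" "L = 0"
  | "card K4s = 1" "card (\<Union>K4s) = 4" "L = 0"
  | "card K4s = 2" "card (\<Union>K4s) = 7" "L = 0"
  | "card K4s = 2" "card (\<Union>K4s) = 8" "L \<le> 4"
  | "card K4s = 3" "10 \<le> card (\<Union>K4s)"
proof -
  consider "card K4s = 0" | "card K4s = 1" | "card K4s = 2" | "card K4s = 3"
    using card_K4s_le_3[OF assms(1)] by linarith
  then show thesis
  proof cases
    case 1
    then have "K4s = {}" using finite_K4s by simp
    have "{} \<notin> light_edges"
    proof
      assume "{} \<in> light_edges"
      then show False using edgeD[OF light_edge_in_E[of "{}"]] by simp
    qed
    then have "{e \<in> light_edges. e \<subseteq> {}} = {}" by auto
    then show thesis using that(1) 1 \<open>K4s = {}\<close> by (simp add: L_def)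
  next
    case 2
    then obtain A where A: "K4s = {A}" by (meson card_1_singletonE)
    then have "A \<in> K4s" by simp
    then have "A \<inter> A \<noteq> {}" using card_K4 by fastforce
    then have "{e \<in> light_edges. e \<subseteq> A \<union> A} = {}"
      using no_light_edges_in_intersecting_K4s \<open>A \<in> K4s\<close> by blast
    moreover have "\<Union>K4s = A \<union> A" using A by simp
    ultimately have "L = 0" unfolding L_def by (simp only: card.empty)
    then show thesis using that(2) 2 A card_K4[OF \<open>A \<in> K4s\<close>] by simp
  next
    case 3
    then obtain A B where AB: "K4s = {A, B}" "A \<noteq> B" by (meson card_2_iff)
    then have K: "A \<in> K4s" "B \<in> K4s" by auto
    have "card (A \<union> B) + card (A \<inter> B) = 8"
      using card_Un_Int[OF finite_K4 finite_K4, OF K] card_K4[OF K(1)] card_K4[OF K(2)] by simp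
    moreover have "card (A \<inter> B) \<le> 1" using card_Int_K4s[OF K AB(2)] .
    moreover have "\<Union>K4s = A \<union> B" using AB by simp
    ultimately show thesis
    proof (cases "A \<inter> B = {}")
      case True
      have "L \<le> 4" unfolding L_def \<open>\<Union>K4s = A \<union> B\<close> by (rule card_light_edges_in_two_K4s[OF K])
      then show thesis
        using that(4) 3 True \<open>card (A \<union> B) + _ = 8\<close> \<open>\<Union>K4s = A \<union> B\<close> by simp
    next
      case False
      then have "card (A \<inter> B) = 1"
        using \<open>card (A \<inter> B) \<le> 1\<close> finite_K4[OF K(1)] by (simp add: le_Suc_eq)
      moreover have "L = 0"
        unfolding L_def \<open>\<Union>K4s = A \<union> B\<close> no_light_edges_in_intersecting_K4s[OF K False] by simp
      ultimately show thesis
        using that(3) 3 \<open>card (A \<union> B) + _ = 8\<close> \<open>\<Union>K4s = A \<union> B\<close> by simp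
    qed
  next
    case 4
    then obtain A B C where ABC: "K4s = {A, B, C}" "A \<noteq> B" "A \<noteq> C" "B \<noteq> C"
      by (meson card_3_iff)
    then have "A \<in> K4s" "B \<in> K4s" "C \<in> K4s" by simp_all
    then have "10 \<le> card (A \<union> B \<union> C)" using card_Un_three_K4s ABC(2-4) by blast
    moreover have "\<Union>K4s = A \<union> B \<union> C" using ABC(1) by auto
    ultimately have "10 \<le> card (\<Union>K4s)" by simp
    then show thesis using that(5) 4 by blast
  qed
qed

lemma eight_card_triangles_le:
  assumes "9 \<le> card V" "card V \<le> 11"
  shows "8 * card Tri \<le> card V ^ 2"
proof -
  let ?m = "card (V - \<Union>K4s)"
  have T: "card Tri \<le> 4 * card K4s + card light_triangles" by (rule card_triangles_le)
  have B: "8 * card light_triangles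
      \<le> ?m ^ 2 + 4 * card K4s * ?m + 4 * card {e \<in> light_edges. e \<subseteq> \<Union>K4s}"
    by (rule light_triangles_bound_K4s)
  have O: "?m \<le> 1 \<Longrightarrow> card light_triangles \<le> ?m * (card K4s choose 2)"
    using card_light_triangles_le_outside[OF assms(2)] .
  have m: "?m = card V - card (\<Union>K4s)" "card (\<Union>K4s) \<le> card V"
    using Union_K4s_subset_V finite_V by (auto simp: card_Diff_subset finite_subset card_mono)
  have n: "card V = 9 \<or> card V = 10 \<or> card V = 11" using assms by linarith
  from K4s_configurations[OF assms(2)] show ?thesis
  proof cases
    case 1 then show ?thesis using T B m by simp
  next
    case 2 with n show ?thesis using T B m by (elim disjE; simp; presburger)
  next
    case 3 with n show ?thesis using T B m by (elim disjE; simp; presburger)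
  next
    case 4 with n show ?thesis using T B O m by (elim disjE; simp; presburger)
  next
    case 5
    then have "?m \<le> 1" "10 + ?m \<le> card V" using m assms(2) by linarith+
    moreover have "card light_triangles \<le> 3 * ?m"
      using O[OF \<open>?m \<le> 1\<close>] 5 by (simp add: choose_two)
    ultimately show ?thesis using T 5 n by (elim disjE; simp; presburger)
  qed
qed

end

theorem theorem2:
  fixes V :: "'a set" and E :: "'a set set" and n t :: nat
  assumes "(n, t) \<in> {(9, 11), (10, 13), (11, 16)}"
    and "simple_graph V E" and "card V = n"
    and "card (triangles V E) \<ge> t"
  shows "contains_subgraph {0..4::nat} susp_P4_edges V E"
proof (rule ccontr)
  assume "\<not> contains_subgraph {0..4::nat} susp_P4_edges V E"
  then interpret gem_free V E using assms(2) by unfold_locales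
  have "8 * card (triangles V E) \<le> n ^ 2"
    using eight_card_triangles_le assms(1,3) by auto
  moreover have "n ^ 2 < 8 * t" using assms(1) by auto
  ultimately show False using assms(4) by linarith
qed

end
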